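(* Consider the downlink RIS-aided multi-cell network described in the context, and let $L = \frac{T}{M_\text{B}M_\text{R}M_\text{U}+M_\text{B}M_\text{U}}$. Its area spectrum efficiency as a function of the unit training overhead $\beta\in[0,L)$ has the form $$\mathcal{A}(\beta) = K' \,\frac{T-\beta(M_\text{B}M_\text{R}M_\text{U}+M_\text{B}M_\text{U})}{T}\, p_{\text{E}_\text{B}}(\sigma_\text{B},\theta_\text{B})\, p_{\text{E}_\text{U}}(\sigma_\text{U},\theta_\text{U}),$$ with $K'>0$ independent of $\beta$. Then the optimal unit training overhead $\beta^*_\mathcal{A}\in(0,L)$ maximizing $\mathcal{A}$ satisfies $$\frac{\text{SNR}}{\sqrt{\pi}\, f(\beta^*_\mathcal{A})}\left(L-\beta^*_\mathcal{A}\right)\left(\frac{a e^{-a^2 f^2(\beta^*_\mathcal{A})}}{\operatorname{erf}(a f(\beta^*_\mathcal{A}))}+\frac{b e^{-b^2 f^2(\beta^*_\mathcal{A})}}{\operatorname{erf}(b f(\beta^*_\mathcal{A}))}-\frac{c e^{-c^2 f^2(\beta^*_\mathcal{A})}}{\operatorname{erf}(c f(\beta^*_\mathcal{A}))}-\frac{d e^{-d^2 f^2(\beta^*_\mathcal{A})}}{\operatorname{erf}(d f(\beta^*_\mathcal{A}))}\right)=1,$$ where $f(\beta)=\sqrt{1+\beta\,\text{SNR}}$, $a=\frac{\theta_\text{B}}{2\pi\sqrt{2k_\text{B}}}$, $b=\frac{\theta_\text{U}}{2\pi\sqrt{2k_\text{U}}}$, $c=\frac{1}{\sqrt{2k_\text{B}}}$,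 $d=\frac{1}{\sqrt{2k_\text{U}}}$.
   Context: Base stations (BSs) and user equipments (UEs) carry uniform linear arrays with $M_\text{B}\ge1$ and $M_\text{U}\ge1$ antennas; each reconfigurable intelligent surface (RIS) has $M_\text{R}$ reflecting elements. Beamwidths are $\theta_j=4/M_j$ (radians), $j\in\{\text{B},\text{U}\}$. A frame of length $T$ is split into a channel estimation phase of length $T_\text{E}=\beta(M_\text{B}M_\text{R}M_\text{U}+M_\text{B}M_\text{U})$ and a data phase of length $T_\text{D}=T-T_\text{E}$, where $\beta$ is the unit training overhead (training symbols per path). With average channel signal-to-noise ratio $\text{SNR}>0$, the estimation error variance is $\sigma_\text{E}^2=\frac{1}{1+\beta\,\text{SNR}}$, and the beam alignment error of end $j$ is a zero-mean Gaussian truncated to $[-\pi,\pi]$ with variance parameter $\sigma_j^2=k_j\pi^2\sigma_\text{E}^2$, $k_j\in(0,1]$. The alignment probability is $p_{\text{E}_j}(\sigma_j,\theta_j)=\operatorname{erf}\!\left(\frac{\theta_j}{2\sqrt{2\sigma_j^2}}\right)\Big/\operatorname{erf}\!\left(\frac{\pi}{\sqrt{2\sigma_j^2}}\right)$. The area spectrum efficiency is $\mathcal{A}=\frac{T_\text{D}}{T}\lambda_\text{B}\,\mathbb{E}[\log_2(1+\text{SINR})\,\mathbb{I}\{\text{SINR}>\tau\}]$, with $\lambda_\text{B}$ the BS density and $\tau$ an SINR threshold; the serving link's beamforming gain equals $N_\text{B}N_\text{U}$ with probability $p_{\text{E}_\text{B}}p_{\text{E}_\text{U}}$ and $0$ otherwise,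 and all remaining factors (geometry, blockage, interference, noise) form the constant $K'>0$ independent of $\beta$. *)

theory Defs
  imports "HOL-Analysis.Analysis"
begin

definition erf :: "real \<Rightarrow> real" where
  "erf x = 2 / sqrt pi * (LBINT t=0..x. exp (- (t\<^sup>2)))"

definition beamwidth :: "nat \<Rightarrow> real" where
  "beamwidth M = 4 / real M"

definition sigmaE2 :: "real \<Rightarrow> real \<Rightarrow> real" where
  "sigmaE2 SNR \<beta> = 1 / (1 + \<beta> * SNR)"

definition sigma2 :: "real \<Rightarrow> real \<Rightarrow> real \<Rightarrow> real" where
  "sigma2 k SNR \<beta> = k * pi\<^sup>2 * sigmaE2 SNR \<beta>"

text \<open>Alignment probability p_E(sigma, theta), with s2 = sigma^2.\<close>
definition pE :: "real \<Rightarrow> real \<Rightarrow> real" where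
  "pE s2 \<theta> = erf (\<theta> / (2 * sqrt (2 * s2))) / erf (pi / sqrt (2 * s2))"

definition ASE :: "real \<Rightarrow> real \<Rightarrow> nat \<Rightarrow> nat \<Rightarrow> nat \<Rightarrow> real \<Rightarrow> real \<Rightarrow> real \<Rightarrow> real \<Rightarrow> real" where
  "ASE K' T MB MR MU SNR kB kU \<beta> =
     K' * (T - \<beta> * (real MB * real MR * real MU + real MB * real MU)) / T
       * pE (sigma2 kB SNR \<beta>) (beamwidth MB) * pE (sigma2 kU SNR \<beta>) (beamwidth MU)"

end

theory Submission
  imports Defs
begin

text \<open>Since \<open>sqrt (2 \<sigma>\<^sub>j\<^sup>2) = \<pi> sqrt (2 k\<^sub>j) / f \<beta>\<close>, the alignment probabilities are
  \<open>erf (a f \<beta>) / erf (c f \<beta>)\<close> and \<open>erf (b f \<beta>) / erf (d f \<beta>)\<close>, so the area spectrum efficiency is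
  \<open>K'/L \<cdot> exp (\<phi> \<beta>)\<close> where \<open>\<phi>\<close> (\<open>ASE_exponent\<close>) is \<open>ln (L - \<beta>)\<close> plus or minus four
  terms \<open>ln erf (q f \<beta>)\<close>. As \<open>exp\<close> is monotone, an interior maximiser is a critical point of
  \<open>\<phi>\<close>; with \<open>erf' x = 2 / sqrt \<pi> \<cdot> exp (-x\<^sup>2)\<close> and \<open>f' = SNR / (2 f)\<close>, the equation
  \<open>\<phi>' = 0\<close> multiplied by \<open>L - \<beta>\<close> is the claimed identity.\<close>

lemma erf_has_real_derivative:
  "(erf has_real_derivative (2 / sqrt pi * exp (- (x\<^sup>2)))) (at x)"
proof -
  have "((\<lambda>u. LBINT t=ereal 0..ereal u. exp (- (t\<^sup>2))) has_vector_derivative exp (- (x\<^sup>2)))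
      (at x within {-\<bar>x\<bar>-1..\<bar>x\<bar>+1})"
    by (rule interval_integral_FTC2) (auto intro!: continuous_intros)
  then have "((\<lambda>u. LBINT t=ereal 0..ereal u. exp (- (t\<^sup>2))) has_real_derivative exp (- (x\<^sup>2))) (at x)"
    by (simp add: at_within_Icc_at has_real_derivative_iff_has_vector_derivative)
  from DERIV_cmult[OF this, of "2 / sqrt pi"] show ?thesis
    by (simp add: erf_def [abs_def] zero_ereal_def)
qed

lemma has_real_derivative_erf [derivative_intros]:
  "(g has_real_derivative g') (at x within S) \<Longrightarrow>
    ((\<lambda>t. erf (g t)) has_real_derivative 2 / sqrt pi * exp (- ((g x)\<^sup>2)) * g') (at x within S)"
  using DERIV_chain2[OF erf_has_real_derivative] by blast

lemma erf_0 [simp]: "erf 0 = 0"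
  by (simp add: erf_def zero_ereal_def)

lemma erf_pos:
  assumes "x > 0"
  shows "erf x > 0"
proof -
  have "\<exists>y. (erf has_real_derivative y) (at t) \<and> y > 0" for t
    using erf_has_real_derivative by (intro exI conjI) auto
  then have "erf 0 < erf x"
    by (rule DERIV_pos_imp_increasing[OF assms])
  then show ?thesis
    by simp
qed

lemma has_real_derivative_ln_erf_scaled_sqrt:
  fixes q SNR x :: real
  assumes "q > 0" and "1 + x * SNR > 0"
  shows "((\<lambda>\<beta>. ln (erf (q * sqrt (1 + \<beta> * SNR)))) has_real_derivative
      SNR / (sqrt pi * sqrt (1 + x * SNR)) *
      (q * exp (- (q\<^sup>2 * (sqrt (1 + x * SNR))\<^sup>2)) / erf (q * sqrt (1 + x * SNR)))) (at x)"
proof -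
  have "erf (q * sqrt (1 + x * SNR)) > 0"
    using assms by (intro erf_pos) auto
  then show ?thesis
    using assms
    by (auto intro!: derivative_eq_intros simp: power_mult_distrib divide_simps)
qed

lemma sqrt_2_sigma2:
  assumes "k \<ge> 0" and "1 + \<beta> * SNR > 0"
  shows "sqrt (2 * sigma2 k SNR \<beta>) = pi * sqrt (2 * k) / sqrt (1 + \<beta> * SNR)"
proof -
  have "2 * sigma2 k SNR \<beta> = (2 * k) * pi\<^sup>2 / (1 + \<beta> * SNR)"
    by (simp add: sigma2_def sigmaE2_def)
  then show ?thesis
    by (simp add: real_sqrt_mult real_sqrt_divide)
qed

lemma pE_sigma2_eq:
  assumes "k > 0" and "1 + \<beta> * SNR > 0"
  shows "pE (sigma2 k SNR \<beta>) \<theta> =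
    erf (\<theta> / (2 * pi * sqrt (2 * k)) * sqrt (1 + \<beta> * SNR)) / erf (1 / sqrt (2 * k) * sqrt (1 + \<beta> * SNR))"
  using assms by (simp add: pE_def sqrt_2_sigma2 field_simps)

definition ASE_exponent :: "real \<Rightarrow> real \<Rightarrow> real \<Rightarrow> real \<Rightarrow> real \<Rightarrow> real \<Rightarrow> real \<Rightarrow> real" where
  "ASE_exponent L SNR a b c d \<beta> =
    ln (L - \<beta>) + ln (erf (a * sqrt (1 + \<beta> * SNR))) + ln (erf (b * sqrt (1 + \<beta> * SNR)))
      - ln (erf (c * sqrt (1 + \<beta> * SNR))) - ln (erf (d * sqrt (1 + \<beta> * SNR)))"

lemma ASE_eq_exp:
  fixes K' T SNR kB kU \<beta> :: real and MB MR MU :: nat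
  defines "L \<equiv> T / (real MB * real MR * real MU + real MB * real MU)"
  defines "a \<equiv> beamwidth MB / (2 * pi * sqrt (2 * kB))"
  defines "b \<equiv> beamwidth MU / (2 * pi * sqrt (2 * kU))"
  defines "c \<equiv> 1 / sqrt (2 * kB)"
  defines "d \<equiv> 1 / sqrt (2 * kU)"
  assumes "MB \<ge> 1" and "MU \<ge> 1" and "T > 0" and "SNR \<ge> 0" and "kB > 0" and "kU > 0"
    and "\<beta> \<in> {0..<L}"
  shows "ASE K' T MB MR MU SNR kB kU \<beta> = K' / L * exp (ASE_exponent L SNR a b c d \<beta>)"
proof -
  define M where "M = real MB * real MR * real MU + real MB * real MU"
  define F where "F = sqrt (1 + \<beta> * SNR)"
  have "M > 0"
    using assms(6,7) by (simp add: M_def add_nonneg_pos)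
  have snr_pos: "1 + \<beta> * SNR > 0"
    using assms(9,12) by (simp add: add_pos_nonneg)
  then have "F > 0"
    by (simp add: F_def)
  moreover have "a > 0" "b > 0" "c > 0" "d > 0"
    using assms(6,7,10,11) by (simp_all add: a_def b_def c_def d_def beamwidth_def)
  ultimately have erf_terms_pos: "erf (q * F) > 0" if "q \<in> {a, b, c, d}" for q
    using that by (auto intro: erf_pos)
  have "exp (ASE_exponent L SNR a b c d \<beta>)
      = (L - \<beta>) * (erf (a * F) / erf (c * F)) * (erf (b * F) / erf (d * F))"
    using assms(12) erf_terms_pos by (simp add: ASE_exponent_def F_def [symmetric] exp_add exp_diff)
  moreover have "T - \<beta> * M = M * (L - \<beta>)" and "L = T / M"
    using \<open>M > 0\<close> by (simp_all add: L_def M_def field_simps)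
  ultimately show ?thesis
    using \<open>M > 0\<close> assms(8)
    by (simp add: ASE_def pE_sigma2_eq[OF assms(10) snr_pos] pE_sigma2_eq[OF assms(11) snr_pos]
        M_def[symmetric] a_def b_def c_def d_def F_def)
qed

lemma has_real_derivative_ASE_exponent:
  fixes L SNR a b c d x :: real
  defines "F \<equiv> sqrt (1 + x * SNR)"
  assumes "a > 0" and "b > 0" and "c > 0" and "d > 0" and "1 + x * SNR > 0" and "x < L"
  shows "(ASE_exponent L SNR a b c d has_real_derivative
    - 1 / (L - x) + SNR / (sqrt pi * F) *
      (a * exp (- (a\<^sup>2 * F\<^sup>2)) / erf (a * F) + b * exp (- (b\<^sup>2 * F\<^sup>2)) / erf (b * F)
        - c * exp (- (c\<^sup>2 * F\<^sup>2)) / erf (c * F) - d * exp (- (d\<^sup>2 * F\<^sup>2)) / erf (d * F))) (at x)"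
proof -
  have ln_erf: "((\<lambda>\<beta>. ln (erf (q * sqrt (1 + \<beta> * SNR)))) has_real_derivative
      SNR / (sqrt pi * F) * (q * exp (- (q\<^sup>2 * F\<^sup>2)) / erf (q * F))) (at x)"
    if "q > 0" for q
    unfolding F_def using that assms(6) by (rule has_real_derivative_ln_erf_scaled_sqrt)
  have "((\<lambda>\<beta>. ln (L - \<beta>)) has_real_derivative - 1 / (L - x)) (at x)"
    using assms(7) by (auto intro!: derivative_eq_intros)
  then show ?thesis
    using assms(2-5)
    unfolding ASE_exponent_def [abs_def] right_diff_distrib distrib_left add_diff_eq add.assoc [symmetric]
    by (intro DERIV_add DERIV_diff ln_erf)
qed

theorem corollary2:
  fixes K' T SNR kB kU \<beta>opt :: real and MB MR MU :: nat
  defines "L \<equiv> T / (real MB * real MR * real MU + real MB * real MU)"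
  defines "f \<equiv> (\<lambda>\<beta>. sqrt (1 + \<beta> * SNR))"
  defines "a \<equiv> beamwidth MB / (2 * pi * sqrt (2 * kB))"
  defines "b \<equiv> beamwidth MU / (2 * pi * sqrt (2 * kU))"
  defines "c \<equiv> 1 / sqrt (2 * kB)"
  defines "d \<equiv> 1 / sqrt (2 * kU)"
  assumes "MB \<ge> 1" and "MU \<ge> 1"
    and "T > 0" and "K' > 0" and "SNR > 0"
    and "0 < kB" and "kB \<le> 1" and "0 < kU" and "kU \<le> 1"
    and "\<beta>opt \<in> {0<..<L}"
    and "\<forall>\<beta>\<in>{0..<L}. ASE K' T MB MR MU SNR kB kU \<beta> \<le> ASE K' T MB MR MU SNR kB kU \<beta>opt"
  shows "SNR / (sqrt pi * f \<beta>opt) * (L - \<beta>opt) *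
           (a * exp (- (a\<^sup>2 * (f \<beta>opt)\<^sup>2)) / erf (a * f \<beta>opt)
          + b * exp (- (b\<^sup>2 * (f \<beta>opt)\<^sup>2)) / erf (b * f \<beta>opt)
          - c * exp (- (c\<^sup>2 * (f \<beta>opt)\<^sup>2)) / erf (c * f \<beta>opt)
          - d * exp (- (d\<^sup>2 * (f \<beta>opt)\<^sup>2)) / erf (d * f \<beta>opt)) = 1"
proof -
  have "L > 0" and opt: "0 < \<beta>opt" "\<beta>opt < L"
    using assms(7-9,16) by (auto simp: L_def add_nonneg_pos)
  have ASE_exp: "ASE K' T MB MR MU SNR kB kU \<beta> = K' / L * exp (ASE_exponent L SNR a b c d \<beta>)"
    if "\<beta> \<in> {0..<L}" for \<beta>
    using ASE_eq_exp[of MB MU T SNR kB kU \<beta> MR K'] assms(7-15) that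
    unfolding L_def a_def b_def c_def d_def by simp
  define S where "S = a * exp (- (a\<^sup>2 * (f \<beta>opt)\<^sup>2)) / erf (a * f \<beta>opt)
    + b * exp (- (b\<^sup>2 * (f \<beta>opt)\<^sup>2)) / erf (b * f \<beta>opt)
    - c * exp (- (c\<^sup>2 * (f \<beta>opt)\<^sup>2)) / erf (c * f \<beta>opt)
    - d * exp (- (d\<^sup>2 * (f \<beta>opt)\<^sup>2)) / erf (d * f \<beta>opt)"
  have "a > 0" "b > 0" "c > 0" "d > 0"
    using assms(7,8,12,14) by (simp_all add: a_def b_def c_def d_def beamwidth_def)
  moreover have "1 + \<beta>opt * SNR > 0"
    using opt assms(11) by (simp add: add_pos_pos)
  ultimately have "(ASE_exponent L SNR a b c d has_real_derivative
      - 1 / (L - \<beta>opt) + SNR / (sqrt pi * f \<beta>opt) * S) (at \<beta>opt)"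
    using opt unfolding f_def S_def by (intro has_real_derivative_ASE_exponent)
  moreover have "ASE_exponent L SNR a b c d y \<le> ASE_exponent L SNR a b c d \<beta>opt"
    if "\<bar>\<beta>opt - y\<bar> < min \<beta>opt (L - \<beta>opt)" for y
  proof -
    have "y \<in> {0..<L}" and "\<beta>opt \<in> {0..<L}"
      using that opt by auto
    with assms(17) have "K' / L * exp (ASE_exponent L SNR a b c d y)
        \<le> K' / L * exp (ASE_exponent L SNR a b c d \<beta>opt)"
      by (metis ASE_exp)
    moreover have "K' / L > 0"
      using assms(10) \<open>L > 0\<close> by simp
    ultimately show ?thesis
      by (simp only: mult_le_cancel_left_pos exp_le_cancel_iff)
  qed
  ultimately have "- 1 / (L - \<beta>opt) + SNR / (sqrt pi * f \<beta>opt) * S = 0"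
    using opt by (intro DERIV_local_max[of _ _ _ "min \<beta>opt (L - \<beta>opt)"]) auto
  then show ?thesis
    using opt unfolding S_def[symmetric] by (simp add: field_simps)
qed

end
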